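(* Let $k_+,k_-,t$ be integers with $0\leq k_-\leq k_+$, $k_++k_-\geq 1$ and $t>0$, and let $M\triangleq[-k_-,k_+]^*$. For every real $0<\epsilon<1/t$ there is a number $\lambda$, depending only on $t$ and $\epsilon$ (and not on $N$), such that for every sufficiently large integer $N$ with $\gcd(N,k_+!)=1$, setting $G\triangleq\mathbb{Z}_N$, there exists a subset $S=\{s_1,s_2,\dots, s_n\}\subseteq G$ with $\frac{1}{2}N^{1/t-\epsilon}\leq n \leq \frac{3}{2}N^{1/t-\epsilon}$ such that $G \overset{\lambda}{\geq} M \diamond_t S$.
   Context: $[a,b]^*=\{a,a+1,\dots,b\}\setminus\{0\}$. For a finite Abelian group $G$, a finite set $M\subseteq\mathbb{Z}\setminus\{0\}$ and $S=\{s_1,\dots,s_n\}\subseteq G$, we write $G \overset{\lambda}{\geq} M\diamond_t S$ if every element $g\in G$ can be written in at most $\lambda$ ways as a linear combination of at most $t$ elements of $S$ with coefficients from $M\cup\{0\}$, i.e., the number of vectors $\mathbf{e}\in(M\cup\{0\})^n$ with Hamming weight at most $t$ and $\sum_i e_is_i=g$ is at most $\lambda$. *)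

theory Defs
  imports Complex_Main
begin

definition punct_interval :: "int \<Rightarrow> int \<Rightarrow> int set" where
  "punct_interval a b = {a..b} - {0}"

text \<open>The group Z_N is represented by the residues {0,...,N-1} (as integers) with
  arithmetic mod N.\<close>
definition reps :: "nat \<Rightarrow> int set \<Rightarrow> nat \<Rightarrow> int set \<Rightarrow> int \<Rightarrow> (int \<Rightarrow> int) set" where
  "reps N M t S g =
     {e. (\<forall>s. s \<notin> S \<longrightarrow> e s = 0) \<and> (\<forall>s\<in>S. e s \<in> M \<union> {0})
         \<and> card {s\<in>S. e s \<noteq> 0} \<le> t
         \<and> (\<Sum>s\<in>S. e s * s) mod int N = g mod int N}"

definition lambda_packing :: "nat \<Rightarrow> nat \<Rightarrow> int set \<Rightarrow> nat \<Rightarrow> int set \<Rightarrow> bool" where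
  "lambda_packing N lam M t S \<longleftrightarrow> (\<forall>g\<in>{0..<int N}. card (reps N M t S g) \<le> lam)"

end

theory Submission
  imports Defs "HOL-Library.FuncSet"
begin

text \<open>Take for \<open>S\<close> a random \<open>n\<close>-subset of \<open>\<int>\<^sub>N\<close> with \<open>n \<approx> N\<^bsup>1/t - \<epsilon>\<^esup>\<close> and work with
  representations of weight at most \<open>t\<close> over \<open>V = M \<union> {0}\<close>. Call a list of representations of
  one residue \<open>g\<close> a chain if each of them has a support point outside the supports of the
  older ones, and call two distinct representations of the same residue with the same support
  a collision. If \<open>S\<close> contains the joint support of no chain of length \<open>L\<close> and the support of
  no collision, then for every \<open>g\<close> a maximal chain inside \<open>S\<close> covers at most \<open>t (L - 1)\<close>
  points, every representation of \<open>g\<close> inside \<open>S\<close> is supported there, and distinct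
  representations have distinct supports: at most \<open>2\<^bsup>t (L - 1)\<^esup>\<close> representations.

  Removing one support point at a time, whose position is then fixed up to \<open>O(K)\<close> choices by a
  linear congruence with a nonzero coefficient of size at most \<open>K\<close> (for any modulus), bounds the
  expected number of bad configurations inside \<open>S\<close> by \<open>O(N (n\<^sup>t / N)\<^sup>L + n\<^sup>t / N)\<close>, which is
  \<open>O(N\<^bsup>-t \<epsilon>\<^esup>)\<close> as soon as \<open>t \<epsilon> L \<ge> 1 + t \<epsilon>\<close>; so a good \<open>S\<close> exists for large \<open>N\<close>.\<close>

section \<open>Short linear combinations\<close>

definition supp :: "(int \<Rightarrow> int) \<Rightarrow> int set" where
  "supp e = {s. e s \<noteq> 0}"

text \<open>Coefficient vectors are indexed by all of \<open>\<int>\<^sub>N = {0..<N}\<close>; those supported in \<open>S\<close> are the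
  representations counted by \<^const>\<open>reps\<close>.\<close>
definition short_vecs :: "nat \<Rightarrow> int set \<Rightarrow> nat \<Rightarrow> (int \<Rightarrow> int) set" where
  "short_vecs N V k =
     {e. (\<forall>s. s \<notin> {0..<int N} \<longrightarrow> e s = 0) \<and> (\<forall>s. e s \<in> V) \<and> card (supp e) \<le> k}"

definition lin_comb :: "nat \<Rightarrow> (int \<Rightarrow> int) \<Rightarrow> int" where
  "lin_comb N e = (\<Sum>s\<in>{0..<int N}. e s * s)"

definition short_reps :: "nat \<Rightarrow> int set \<Rightarrow> nat \<Rightarrow> int \<Rightarrow> (int \<Rightarrow> int) set" where
  "short_reps N V k g = {e \<in> short_vecs N V k. lin_comb N e mod int N = g mod int N}"

lemma supp_short_vecs: "e \<in> short_vecs N V k \<Longrightarrow> supp e \<subseteq> {0..<int N}"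
  unfolding short_vecs_def supp_def by auto

lemma finite_supp_short_vecs: "e \<in> short_vecs N V k \<Longrightarrow> finite (supp e)"
  using finite_subset[OF supp_short_vecs] by simp

lemma card_supp_short_vecs: "e \<in> short_vecs N V k \<Longrightarrow> card (supp e) \<le> k"
  unfolding short_vecs_def by blast

lemma short_vecs_range: "e \<in> short_vecs N V k \<Longrightarrow> e s \<in> V"
  unfolding short_vecs_def by blast

lemma finite_short_vecs:
  assumes "finite V"
  shows "finite (short_vecs N V k)"
proof -
  have "short_vecs N V k \<subseteq>
          {e. \<forall>s. (s \<in> {0..<int N} \<longrightarrow> e s \<in> V) \<and> (s \<notin> {0..<int N} \<longrightarrow> e s = 0)}"
    unfolding short_vecs_def by auto
  moreover have "finite
          {e. \<forall>s. (s \<in> {0..<int N} \<longrightarrow> e s \<in> V) \<and> (s \<notin> {0..<int N} \<longrightarrow> e s = 0)}"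
    using finite_set_of_finite_funs[of "{0..<int N}" V 0] assms by simp
  ultimately show ?thesis
    by (rule finite_subset)
qed

lemma one_le_card_of_mem:
  assumes "finite A" "a \<in> A"
  shows "1 \<le> card A"
proof -
  have "0 < card A"
    using assms by (auto simp: card_gt_0_iff)
  then show ?thesis
    by simp
qed

lemma card_short_vecs_supp_subset:
  assumes "finite A" "finite V"
  shows "card {e \<in> short_vecs N V k. supp e \<subseteq> A} \<le> card V ^ card A"
proof -
  let ?E = "{e \<in> short_vecs N V k. supp e \<subseteq> A}"
  have "inj_on (\<lambda>e. restrict e A) ?E"
  proof (rule inj_onI, rule ext)
    fix e e' s assume e: "e \<in> ?E" "e' \<in> ?E" and eq: "restrict e A = restrict e' A"
    show "e s = e' s"
    proof (cases "s \<in> A")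
      case True
      then show ?thesis using fun_cong[OF eq, of s] by simp
    next
      case False
      then have "e s = 0" "e' s = 0"
        using e unfolding supp_def by blast+
      then show ?thesis by simp
    qed
  qed
  moreover have "(\<lambda>e. restrict e A) ` ?E \<subseteq> (\<Pi>\<^sub>E i\<in>A. V)"
    unfolding short_vecs_def by auto
  ultimately have "card ?E \<le> card (\<Pi>\<^sub>E i\<in>A. V)"
    using assms by (intro card_inj_on_le finite_PiE)
  then show ?thesis
    using assms by (simp add: card_PiE)
qed

lemma supp_fun_upd_zero: "supp (e(d := 0)) = supp e - {d}"
  unfolding supp_def by auto

lemma fun_upd_zero_short_vecs:
  assumes "e \<in> short_vecs N V (Suc k)" "d \<in> supp e" "0 \<in> V"
  shows "e(d := 0) \<in> short_vecs N V k"
proof -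
  have "card (supp e - {d}) \<le> k"
    using assms(1,2) card_supp_short_vecs[OF assms(1)] finite_supp_short_vecs[OF assms(1)] by simp
  then show ?thesis
    using assms unfolding short_vecs_def by (auto simp: supp_fun_upd_zero)
qed

lemma card_supp_diff_fun_upd_zero:
  assumes "finite (supp e)" "d \<in> supp e - W"
  shows "card (supp e - W) = Suc (card (supp (e(d := 0)) - W))"
proof -
  have "supp (e(d := 0)) - W = (supp e - W) - {d}"
    unfolding supp_fun_upd_zero by auto
  moreover have "finite (supp e - W)"
    using assms(1) by simp
  ultimately show ?thesis
    using assms(2) card_Suc_Diff1[of "supp e - W" d] by simp
qed

lemma lin_comb_fun_upd_zero:
  assumes "d \<in> {0..<int N}"
  shows "lin_comb N e = lin_comb N (e(d := 0)) + e d * d"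
proof -
  have "(\<Sum>s\<in>{0..<int N} - {d}. (e(d := 0)) s * s) = (\<Sum>s\<in>{0..<int N} - {d}. e s * s)"
    by (rule sum.cong) auto
  then show ?thesis
    unfolding lin_comb_def
    using sum.remove[OF _ assms, of "\<lambda>s. e s * s"] sum.remove[OF _ assms, of "\<lambda>s. (e(d := 0)) s * s"]
    by simp
qed

lemma lin_comb_fun_upd_of_zero:
  assumes "d \<in> {0..<int N}" "e d = 0"
  shows "lin_comb N (e(d := c)) = lin_comb N e + c * d"
  using lin_comb_fun_upd_zero[OF assms(1), of "e(d := c)"] assms(2) by (simp add: fun_upd_idem)

lemma fun_upd_eq_cancel: "f(a := c) = g(a := c) \<Longrightarrow> f a = g a \<Longrightarrow> f = g"
  by (metis fun_upd_triv fun_upd_upd)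

lemma inj_on_remove_entry: "inj_on (\<lambda>e. (e(p e := z), e (p e), p e)) A"
proof (rule inj_onI)
  fix e e' assume "(e(p e := z), e (p e), p e) = (e'(p e' := z), e' (p e'), p e')"
  then show "e = e'"
    by (intro fun_upd_eq_cancel[of e "p e" z e']) auto
qed

lemma quotient_in_range:
  fixes z r q :: int
  assumes "\<bar>z\<bar> \<le> int K * int N" "0 \<le> r" "r < int N" "z - r = int N * q"
  shows "q \<in> {- int K - 1..int K}"
proof -
  have "z \<le> int K * int N" "- (int K * int N) \<le> z"
    using assms(1) by (simp_all add: abs_le_iff)
  then have "int N * q \<le> int K * int N" "- (int K * int N) - int N < int N * q"
    using assms(2-4) by linarith+
  then have "int N * q \<le> int N * int K" "int N * (- int K - 1) < int N * q"
    by (simp_all add: algebra_simps)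
  then show ?thesis
    using assms(2,3) by (simp add: mult_less_cancel_left mult_le_cancel_left)
qed

lemma card_solutions_mod_le:
  fixes c h :: int
  assumes "c \<noteq> 0" "\<bar>c\<bar> \<le> int K"
  shows "card {d \<in> {0..<int N}. (c * d) mod int N = h mod int N} \<le> 2 * K + 2"
proof -
  let ?D = "{d \<in> {0..<int N}. (c * d) mod int N = h mod int N}"
  define r where "r = h mod int N"
  define q where "q d = (c * d - r) div int N" for d
  have q: "c * d - r = int N * q d" if "d \<in> ?D" for d
  proof -
    have "(c * d) mod int N = r mod int N"
      using that unfolding r_def by simp
    then have "int N dvd c * d - r"
      by (simp add: mod_eq_dvd_iff)
    then show ?thesis
      unfolding q_def by simp
  qed
  have inj: "inj_on q ?D"
  proof (rule inj_onI)
    fix d d' assume "d \<in> ?D" "d' \<in> ?D" "q d = q d'"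
    then have "c * d - r = c * d' - r"
      using q[of d] q[of d'] by simp
    then show "d = d'"
      using assms(1) by simp
  qed
  have "q ` ?D \<subseteq> {- int K - 1..int K}"
  proof (rule image_subsetI)
    fix d assume d: "d \<in> ?D"
    then have "\<bar>c\<bar> * \<bar>d\<bar> \<le> int K * int N"
      using assms(2) by (intro mult_mono) auto
    moreover have "0 \<le> r" "r < int N"
      using d unfolding r_def by auto
    ultimately show "q d \<in> {- int K - 1..int K}"
      using q[OF d] by (intro quotient_in_range) (auto simp: abs_mult)
  qed
  then have "card (q ` ?D) \<le> card {- int K - 1..int K}"
    by (rule card_mono[OF finite_atLeastAtMost_int])
  then show ?thesis
    using card_image[OF inj] by simp
qed

section \<open>Counting by removing one support element\<close>

lemma sum_le_card_fibres_mult: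
  fixes f :: "'a \<Rightarrow> real" and g :: "'b \<Rightarrow> real"
  assumes A: "finite A" "\<And>a. a \<in> A \<Longrightarrow> finite (D a)" "\<And>a. a \<in> A \<Longrightarrow> card (D a) \<le> m"
    and h: "inj_on h B" "h ` B \<subseteq> Sigma A D"
    and fg: "\<And>b. b \<in> B \<Longrightarrow> f b = g (fst (h b))" "\<And>a. a \<in> A \<Longrightarrow> 0 \<le> g a"
  shows "(\<Sum>b\<in>B. f b) \<le> real m * (\<Sum>a\<in>A. g a)"
proof -
  have fin: "finite (Sigma A D)"
    using A(1,2) by (rule finite_SigmaI)
  have "(\<Sum>b\<in>B. f b) = (\<Sum>b\<in>B. g (fst (h b)))"
    using fg(1) by (rule sum.cong[OF refl])
  also have "\<dots> = (\<Sum>p\<in>h ` B. g (fst p))"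
    using sum.reindex[OF h(1), of "\<lambda>p. g (fst p)"] by simp
  also have "\<dots> \<le> (\<Sum>p\<in>Sigma A D. g (fst p))"
    using fin h(2) fg(2) by (rule sum_mono2) auto
  also have "\<dots> = (\<Sum>a\<in>A. \<Sum>d\<in>D a. g a)"
    using sum.Sigma[of A D "\<lambda>a d. g a"] A(1,2) by (simp add: split_def)
  also have "\<dots> \<le> (\<Sum>a\<in>A. real m * g a)"
    using A(3) fg(2) by (intro sum_mono) (simp add: mult_right_mono)
  finally show ?thesis
    by (simp add: sum_distrib_left)
qed

lemma card_Sigma_le:
  assumes "finite A" "\<And>a. a \<in> A \<Longrightarrow> finite (D a)" "\<And>a. a \<in> A \<Longrightarrow> card (D a) \<le> m"
  shows "card (Sigma A D) \<le> card A * m"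
proof -
  have "card (Sigma A D) = (\<Sum>a\<in>A. card (D a))"
    using assms(1,2) by simp
  also have "\<dots> \<le> card A * m"
    using sum_bounded_above[of A "\<lambda>a. card (D a)" m] assms(3) by simp
  finally show ?thesis .
qed

text \<open>Removing the largest support point outside \<open>W\<close> is injective once the removed value and
  position are recorded; \<open>fibre\<close> bounds how many such records extend a given shorter vector.\<close>
lemma sum_pow_card_supp_diff_le_by_removal:
  fixes x :: real
  assumes V: "finite V" "0 \<in> V" and x: "x \<ge> 0"
    and B: "B \<subseteq> {e \<in> short_vecs N V (Suc k). \<not> supp e \<subseteq> W}"
    and fibre: "\<And>e'. e' \<in> short_vecs N V k \<Longrightarrow>
       card {(c, d). c \<in> V - {0} \<and> d \<in> {0..<int N} \<and> e' d = 0 \<and> e'(d := c) \<in> B} \<le> m"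
  shows "(\<Sum>e\<in>B. x ^ card (supp e - W)) \<le> real m * (\<Sum>e\<in>short_vecs N V k. x * x ^ card (supp e - W))"
proof -
  define F where "F e' = {(c, d). c \<in> V - {0} \<and> d \<in> {0..<int N} \<and> e' d = 0 \<and> e'(d := c) \<in> B}" for e'
  define pivot where "pivot e = Max (supp e - W)" for e
  have pivot: "pivot e \<in> supp e - W" "finite (supp e)" if "e \<in> B" for e
  proof -
    have "finite (supp e)" "supp e - W \<noteq> {}"
      using that B finite_supp_short_vecs[of e N V "Suc k"] by auto
    then show "pivot e \<in> supp e - W" "finite (supp e)"
      unfolding pivot_def using Max_in[of "supp e - W"] by auto
  qed
  show ?thesis
  proof (rule sum_le_card_fibres_mult[where h = "\<lambda>e. (e(pivot e := 0), e (pivot e), pivot e)" and D = F])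
    show "finite (F e')" for e'
    proof (rule finite_subset)
      show "F e' \<subseteq> V \<times> {0..<int N}"
        unfolding F_def by auto
    qed (simp add: V(1))
    show "inj_on (\<lambda>e. (e(pivot e := 0), e (pivot e), pivot e)) B"
      by (rule inj_on_remove_entry)
    show "(\<lambda>e. (e(pivot e := 0), e (pivot e), pivot e)) ` B \<subseteq> Sigma (short_vecs N V k) F"
    proof (rule image_subsetI)
      fix e assume e: "e \<in> B"
      then have e_short: "e \<in> short_vecs N V (Suc k)"
        using B by auto
      then have "pivot e \<in> {0..<int N}"
        using pivot[OF e] supp_short_vecs[OF e_short] by blast
      moreover have "e(pivot e := 0) \<in> short_vecs N V k"
        using fun_upd_zero_short_vecs[OF e_short _ V(2)] pivot[OF e] by blast
      moreover have "e (pivot e) \<in> V - {0}"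
        using pivot[OF e] short_vecs_range[OF e_short] unfolding supp_def by auto
      ultimately show "(e(pivot e := 0), e (pivot e), pivot e) \<in> Sigma (short_vecs N V k) F"
        using e unfolding F_def by simp
    qed
    show "x ^ card (supp e - W) = x * x ^ card (supp (fst (e(pivot e := 0), e (pivot e), pivot e)) - W)"
      if "e \<in> B" for e
      unfolding fst_conv card_supp_diff_fun_upd_zero[OF pivot(2,1)[OF that]] by simp
    show "card (F e') \<le> m" if "e' \<in> short_vecs N V k" for e'
      using fibre[OF that] unfolding F_def .
    show "0 \<le> x * x ^ card (supp e' - W)" for e'
      using x by simp
  qed (rule finite_short_vecs[OF V(1)])
qed

lemma sum_short_vecs_pow_le_outside:
  fixes x :: real
  assumes V: "finite V" and W: "finite W"
  shows "(\<Sum>e\<in>short_vecs N V k. x ^ card (supp e - W))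
           \<le> real (card V) ^ card W + (\<Sum>e\<in>{e \<in> short_vecs N V k. \<not> supp e \<subseteq> W}. x ^ card (supp e - W))"
proof -
  let ?f = "\<lambda>e. x ^ card (supp e - W)"
  let ?In = "{e \<in> short_vecs N V k. supp e \<subseteq> W}"
  let ?Out = "{e \<in> short_vecs N V k. \<not> supp e \<subseteq> W}"
  have "short_vecs N V k = ?In \<union> ?Out"
    by auto
  then have "(\<Sum>e\<in>short_vecs N V k. ?f e) = (\<Sum>e\<in>?In. ?f e) + (\<Sum>e\<in>?Out. ?f e)"
    using finite_short_vecs[OF V] sum.union_disjoint[of ?In ?Out ?f] by auto
  moreover have "(\<Sum>e\<in>?In. ?f e) = real (card ?In)"
    by (simp add: Diff_eq_empty_iff[THEN iffD2])
  moreover have "real (card ?In) \<le> real (card V) ^ card W"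
    using card_short_vecs_supp_subset[OF W V, of N k] by (simp add: of_nat_le_iff[symmetric])
  ultimately show ?thesis
    by linarith
qed

lemma sum_short_vecs_pow_le:
  fixes x :: real
  assumes V: "finite V" "0 \<in> V" and x: "x \<ge> 0" and W: "finite W"
  shows "(\<Sum>e\<in>short_vecs N V k. x ^ card (supp e - W))
           \<le> real (card V) ^ card W * (1 + real N * real (card V) * x) ^ k"
proof (induction k)
  case 0
  have empty: "{e \<in> short_vecs N V 0. \<not> supp e \<subseteq> W} = {}"
    using card_supp_short_vecs finite_supp_short_vecs by fastforce
  show ?case
    using sum_short_vecs_pow_le_outside[OF V(1) W, of x N 0] unfolding empty by simp
next
  case (Suc k)
  let ?f = "\<lambda>e. x ^ card (supp e - W)"
  let ?c = "real (card V) ^ card W"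
  let ?y = "real N * real (card V) * x"
  let ?Out = "{e \<in> short_vecs N V (Suc k). \<not> supp e \<subseteq> W}"
  have "(\<Sum>e\<in>?Out. ?f e) \<le> real (card V * N) * (\<Sum>e\<in>short_vecs N V k. x * ?f e)"
  proof (rule sum_pow_card_supp_diff_le_by_removal[OF V x])
    fix e' :: "int \<Rightarrow> int"
    have "{(c, d). c \<in> V - {0} \<and> d \<in> {0..<int N} \<and> e' d = 0 \<and> e'(d := c) \<in> ?Out} \<subseteq> V \<times> {0..<int N}"
      by auto
    then show "card {(c, d). c \<in> V - {0} \<and> d \<in> {0..<int N} \<and> e' d = 0 \<and> e'(d := c) \<in> ?Out}
        \<le> card V * N"
      using card_mono[of "V \<times> {0..<int N}"] V(1) by (simp add: card_cartesian_product)
  qed simp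
  also have "\<dots> = ?y * (\<Sum>e\<in>short_vecs N V k. ?f e)"
    by (simp add: sum_distrib_left ac_simps)
  also have "\<dots> \<le> ?y * (?c * (1 + ?y) ^ k)"
    using Suc.IH x by (intro mult_left_mono) auto
  finally have "(\<Sum>e\<in>short_vecs N V (Suc k). ?f e) \<le> ?c + ?y * (?c * (1 + ?y) ^ k)"
    using sum_short_vecs_pow_le_outside[OF V(1) W, of x N "Suc k"] by linarith
  also have "\<dots> \<le> ?c * (1 + ?y) ^ Suc k"
  proof -
    have "?c \<le> ?c * (1 + ?y) ^ k"
      using x by (simp add: mult_le_cancel_left1)
    then show ?thesis
      by (simp add: algebra_simps)
  qed
  finally show ?case .
qed

lemma sum_short_reps_pow_le:
  fixes x :: real
  assumes V: "finite V" "0 \<in> V" "\<forall>v\<in>V. \<bar>v\<bar> \<le> int K" and x: "x \<ge> 0"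
  shows "(\<Sum>e\<in>{e \<in> short_reps N V (Suc k) g. \<not> supp e \<subseteq> W}. x ^ card (supp e - W))
           \<le> real (card V * (2 * K + 2)) * (\<Sum>e\<in>short_vecs N V k. x * x ^ card (supp e - W))"
proof (rule sum_pow_card_supp_diff_le_by_removal[OF V(1,2) x])
  fix e' :: "int \<Rightarrow> int"
  let ?B = "{e \<in> short_reps N V (Suc k) g. \<not> supp e \<subseteq> W}"
  let ?Sol = "\<lambda>c. {d \<in> {0..<int N}. (c * d) mod int N = (g - lin_comb N e') mod int N}"
  have fin_Sol: "finite (?Sol c)" for c
    by (rule finite_subset[of _ "{0..<int N}"]) auto
  have "(c, d) \<in> Sigma (V - {0}) ?Sol"
    if cd: "c \<in> V - {0}" "d \<in> {0..<int N}" "e' d = 0" "e'(d := c) \<in> ?B" for c d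
  proof -
    have "(lin_comb N e' + c * d) mod int N = g mod int N"
      using cd lin_comb_fun_upd_of_zero[of d N e' c] by (simp add: short_reps_def)
    then have "(c * d) mod int N = (g - lin_comb N e') mod int N"
      by (metis add_diff_cancel_left' mod_diff_left_eq)
    then show ?thesis
      using cd by simp
  qed
  then have "{(c, d). c \<in> V - {0} \<and> d \<in> {0..<int N} \<and> e' d = 0 \<and> e'(d := c) \<in> ?B}
      \<subseteq> Sigma (V - {0}) ?Sol"
    by auto
  then have "card {(c, d). c \<in> V - {0} \<and> d \<in> {0..<int N} \<and> e' d = 0 \<and> e'(d := c) \<in> ?B}
      \<le> card (Sigma (V - {0}) ?Sol)"
    by (rule card_mono[rotated]) (intro finite_SigmaI fin_Sol finite_Diff V(1))
  also have "\<dots> \<le> card (V - {0}) * (2 * K + 2)"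
    using V(1,3) by (intro card_Sigma_le card_solutions_mod_le fin_Sol) auto
  also have "\<dots> \<le> card V * (2 * K + 2)"
    using V(1) by (intro mult_le_mono1 card_mono) auto
  finally show "card {(c, d). c \<in> V - {0} \<and> d \<in> {0..<int N} \<and> e' d = 0 \<and> e'(d := c) \<in> ?B}
      \<le> card V * (2 * K + 2)" .
qed (auto simp: short_reps_def)

definition collision_pairs :: "nat \<Rightarrow> int set \<Rightarrow> nat \<Rightarrow> ((int \<Rightarrow> int) \<times> (int \<Rightarrow> int)) set" where
  "collision_pairs N V k =
     {(e, e'). e \<in> short_vecs N V k \<and> e' \<in> short_vecs N V k \<and> e \<noteq> e' \<and> supp e = supp e'
               \<and> lin_comb N e mod int N = lin_comb N e' mod int N}"

lemma finite_collision_pairs: "finite V \<Longrightarrow> finite (collision_pairs N V k)"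
  unfolding collision_pairs_def
  by (rule finite_subset[of _ "short_vecs N V k \<times> short_vecs N V k"]) (auto simp: finite_short_vecs)

definition last_diff :: "(int \<Rightarrow> int) \<Rightarrow> (int \<Rightarrow> int) \<Rightarrow> int" where
  "last_diff e e' = Max {s. e s \<noteq> e' s}"

lemma last_diff_collision:
  assumes "(e, e') \<in> collision_pairs N V k"
  shows "last_diff e e' \<in> supp e" "last_diff e e' \<in> supp e'" "e (last_diff e e') \<noteq> e' (last_diff e e')"
proof -
  have pair: "e \<in> short_vecs N V k" "e \<noteq> e'" "supp e = supp e'"
    using assms unfolding collision_pairs_def by auto
  have "{s. e s \<noteq> e' s} \<subseteq> supp e \<union> supp e'"
    unfolding supp_def by auto
  then have sub: "{s. e s \<noteq> e' s} \<subseteq> supp e"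
    using pair(3) by simp
  moreover have "{s. e s \<noteq> e' s} \<noteq> {}"
    using pair(2) by (simp add: fun_eq_iff)
  ultimately have "last_diff e e' \<in> {s. e s \<noteq> e' s}"
    unfolding last_diff_def using finite_subset finite_supp_short_vecs[OF pair(1)] by (intro Max_in) auto
  then show "last_diff e e' \<in> supp e" "last_diff e e' \<in> supp e'" "e (last_diff e e') \<noteq> e' (last_diff e e')"
    using sub pair(3) by auto
qed

text \<open>What remains of a collision pair \<open>(e, e')\<close> over \<open>e(d := 0)\<close> after removing its last
  difference \<open>d\<close>: the rest of \<open>e'\<close>, the two removed values, and \<open>d\<close>, which solves a congruence
  with the nonzero coefficient \<open>e d - e' d\<close>.\<close>
definition collision_fibre ::
    "nat \<Rightarrow> int set \<Rightarrow> nat \<Rightarrow> (int \<Rightarrow> int) \<Rightarrow> (((int \<Rightarrow> int) \<times> int \<times> int) \<times> int) set" where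
  "collision_fibre N V k e0 =
     (SIGMA (f, c, c'):{f \<in> short_vecs N V k. supp f \<subseteq> supp e0}
                         \<times> {(c, c'). c \<in> V \<and> c' \<in> V \<and> c \<noteq> c'}.
        {d \<in> {0..<int N}. ((c - c') * d) mod int N = (lin_comb N f - lin_comb N e0) mod int N})"

lemma finite_collision_fibre:
  assumes "finite V"
  shows "finite (collision_fibre N V k e0)"
  unfolding collision_fibre_def using assms finite_short_vecs[OF assms]
  by (intro finite_SigmaI finite_cartesian_product)
    (auto intro: finite_subset[of _ "V \<times> V"] finite_subset[of _ "{0..<int N}"])

lemma card_collision_fibre_le:
  assumes V: "finite V" "0 \<in> V" "\<forall>v\<in>V. \<bar>v\<bar> \<le> int K" and e0: "e0 \<in> short_vecs N V k"
  shows "card (collision_fibre N V k e0) \<le> card V ^ (k + 2) * (4 * K + 2)"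
proof -
  let ?F = "{f \<in> short_vecs N V k. supp f \<subseteq> supp e0}"
  let ?P = "{(c, c'). c \<in> V \<and> c' \<in> V \<and> c \<noteq> c'}"
  have "card ?F \<le> card V ^ card (supp e0)"
    using card_short_vecs_supp_subset[OF finite_supp_short_vecs[OF e0] V(1)] .
  also have "\<dots> \<le> card V ^ k"
    using card_supp_short_vecs[OF e0] one_le_card_of_mem[OF V(1,2)] by (simp add: power_increasing)
  finally have "card ?F \<le> card V ^ k" .
  moreover have "card ?P \<le> card V ^ 2"
    using card_mono[of "V \<times> V" ?P] V(1) by (auto simp: card_cartesian_product power2_eq_square)
  ultimately have card_FP: "card (?F \<times> ?P) \<le> card V ^ (k + 2)"
    unfolding card_cartesian_product power_add by (rule mult_le_mono)
  have "card (collision_fibre N V k e0) \<le> card (?F \<times> ?P) * (4 * K + 2)"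
    unfolding collision_fibre_def
  proof (rule card_Sigma_le)
    show "finite (?F \<times> ?P)"
      using finite_short_vecs[OF V(1)] V(1)
      by (intro finite_cartesian_product) (auto intro: finite_subset[of _ "V \<times> V"])
    fix z assume "z \<in> ?F \<times> ?P"
    then obtain f c c' where z: "z = (f, c, c')" "c \<in> V" "c' \<in> V" "c \<noteq> c'"
      by auto
    have "\<bar>c\<bar> \<le> int K" "\<bar>c'\<bar> \<le> int K"
      using z V(3) by auto
    then have "\<bar>c - c'\<bar> \<le> int (2 * K)"
      by linarith
    then show "card (case z of (f, c, c') \<Rightarrow>
        {d \<in> {0..<int N}. ((c - c') * d) mod int N = (lin_comb N f - lin_comb N e0) mod int N})
        \<le> 4 * K + 2"
      unfolding z using card_solutions_mod_le[of "c - c'" "2 * K"] z(4) by simp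
    show "finite (case z of (f, c, c') \<Rightarrow>
        {d \<in> {0..<int N}. ((c - c') * d) mod int N = (lin_comb N f - lin_comb N e0) mod int N})"
      unfolding z by (rule finite_subset[of _ "{0..<int N}"]) auto
  qed
  then show ?thesis
    using card_FP by (meson le_trans mult_le_mono1)
qed

lemma collision_remove_last_diff:
  assumes p: "(e, e') \<in> collision_pairs N V (Suc k)" and V: "0 \<in> V" and d: "d = last_diff e e'"
  shows "(e(d := 0), (e'(d := 0), e d, e' d), d) \<in> Sigma (short_vecs N V k) (collision_fibre N V k)"
proof -
  have pair: "e \<in> short_vecs N V (Suc k)" "e' \<in> short_vecs N V (Suc k)" "supp e = supp e'"
      "lin_comb N e mod int N = lin_comb N e' mod int N"
    using p unfolding collision_pairs_def by auto
  note d_supp = last_diff_collision[OF p, folded d]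
  have d_range: "d \<in> {0..<int N}"
    using d_supp(1) supp_short_vecs[OF pair(1)] by blast
  have "e(d := 0) \<in> short_vecs N V k" "e'(d := 0) \<in> short_vecs N V k"
    using fun_upd_zero_short_vecs[OF pair(1) d_supp(1) V] fun_upd_zero_short_vecs[OF pair(2) d_supp(2) V] .
  moreover have "supp (e'(d := 0)) \<subseteq> supp (e(d := 0))"
    using pair(3) by (simp add: supp_fun_upd_zero)
  moreover have "e d \<in> V" "e' d \<in> V"
    using short_vecs_range pair(1,2) by blast+
  moreover have "((e d - e' d) * d) mod int N = (lin_comb N (e'(d := 0)) - lin_comb N (e(d := 0))) mod int N"
  proof -
    have "int N dvd lin_comb N e - lin_comb N e'"
      using pair(4) by (simp add: mod_eq_dvd_iff)
    moreover have "lin_comb N e - lin_comb N e'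
        = (e d - e' d) * d - (lin_comb N (e'(d := 0)) - lin_comb N (e(d := 0)))"
      using lin_comb_fun_upd_zero[OF d_range, of e] lin_comb_fun_upd_zero[OF d_range, of e']
      by (simp add: algebra_simps)
    ultimately show ?thesis
      by (simp add: mod_eq_dvd_iff)
  qed
  ultimately show ?thesis
    unfolding collision_fibre_def using d_supp(3) d_range by auto
qed

lemma sum_collision_pairs_pow_le:
  fixes x :: real
  assumes V: "finite V" "0 \<in> V" "\<forall>v\<in>V. \<bar>v\<bar> \<le> int K" and x: "x \<ge> 0"
  shows "(\<Sum>p\<in>collision_pairs N V (Suc k). x ^ card (supp (fst p)))
           \<le> real (card V ^ (k + 2) * (4 * K + 2)) * (\<Sum>e\<in>short_vecs N V k. x * x ^ card (supp e))"
proof -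
  define h where "h p = (case p of (e, e') \<Rightarrow>
      (e(last_diff e e' := 0), (e'(last_diff e e' := 0), e (last_diff e e'), e' (last_diff e e')), last_diff e e'))"
    for p
  show ?thesis
  proof (rule sum_le_card_fibres_mult[where h = h and D = "collision_fibre N V k"])
    show "inj_on h (collision_pairs N V (Suc k))"
    proof (rule inj_onI, clarify)
      fix e1 e1' e2 e2'
      assume "h (e1, e1') = h (e2, e2')"
      then have "e1(last_diff e1 e1' := 0) = e2(last_diff e1 e1' := 0)"
        "e1 (last_diff e1 e1') = e2 (last_diff e1 e1')"
        "e1'(last_diff e1 e1' := 0) = e2'(last_diff e1 e1' := 0)"
        "e1' (last_diff e1 e1') = e2' (last_diff e1 e1')"
        unfolding h_def by auto
      then show "e1 = e2 \<and> e1' = e2'"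
        using fun_upd_eq_cancel[of e1 "last_diff e1 e1'" 0 e2] fun_upd_eq_cancel[of e1' "last_diff e1 e1'" 0 e2']
        by simp
    qed
    show "h ` collision_pairs N V (Suc k) \<subseteq> Sigma (short_vecs N V k) (collision_fibre N V k)"
      unfolding h_def using collision_remove_last_diff[OF _ V(2) refl] by auto
    show "x ^ card (supp (fst p)) = x * x ^ card (supp (fst (h p)))"
      if "p \<in> collision_pairs N V (Suc k)" for p
    proof -
      obtain e e' where p: "p = (e, e')"
        by fastforce
      have "finite (supp e)"
        using that finite_supp_short_vecs unfolding p collision_pairs_def by blast
      then have "card (supp e - {}) = Suc (card (supp (e(last_diff e e' := 0)) - {}))"
        using card_supp_diff_fun_upd_zero last_diff_collision(1) that unfolding p by blast
      then show ?thesis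
        unfolding p h_def by simp
    qed
  qed (use V x finite_short_vecs finite_collision_fibre card_collision_fibre_le in auto)
qed

section \<open>Chains of representations\<close>

definition supp_union :: "(int \<Rightarrow> int) list \<Rightarrow> int set" where
  "supp_union es = (\<Union>e\<in>set es. supp e)"

fun is_chain :: "nat \<Rightarrow> int set \<Rightarrow> nat \<Rightarrow> int \<Rightarrow> (int \<Rightarrow> int) list \<Rightarrow> bool" where
  "is_chain N V t g [] \<longleftrightarrow> True"
| "is_chain N V t g (e # es) \<longleftrightarrow>
     is_chain N V t g es \<and> e \<in> short_reps N V t g \<and> \<not> supp e \<subseteq> supp_union es"

definition rep_chains :: "nat \<Rightarrow> int set \<Rightarrow> nat \<Rightarrow> int \<Rightarrow> nat \<Rightarrow> (int \<Rightarrow> int) list set" where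
  "rep_chains N V t g j = {es. length es = j \<and> is_chain N V t g es}"

lemma supp_union_Nil [simp]: "supp_union [] = {}"
  unfolding supp_union_def by simp

lemma supp_union_Cons [simp]: "supp_union (e # es) = supp e \<union> supp_union es"
  unfolding supp_union_def by simp

lemma supp_union_drop: "supp_union (drop k es) \<subseteq> supp_union es"
  unfolding supp_union_def using set_drop_subset[of k es] by auto

lemma is_chain_drop: "is_chain N V t g es \<Longrightarrow> is_chain N V t g (drop k es)"
proof (induction es arbitrary: k)
  case (Cons e es)
  then show ?case
    by (cases k) auto
qed simp

lemma supp_union_chain_subset: "is_chain N V t g es \<Longrightarrow> supp_union es \<subseteq> {0..<int N}"
proof (induction es)
  case (Cons e es)
  then show ?case
    using supp_short_vecs[of e N V t] by (simp add: short_reps_def)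
qed simp

lemma card_supp_union_chain: "is_chain N V t g es \<Longrightarrow> card (supp_union es) \<le> t * length es"
proof (induction es)
  case (Cons e es)
  have e: "e \<in> short_vecs N V t"
    using Cons.prems by (simp add: short_reps_def)
  have "card (supp e \<union> supp_union es) \<le> card (supp e) + card (supp_union es)"
    by (rule card_Un_le)
  also have "\<dots> \<le> t + t * length es"
    using Cons card_supp_short_vecs[OF e] by simp
  finally show ?case
    by simp
qed simp

lemma finite_supp_union_chain: "is_chain N V t g es \<Longrightarrow> finite (supp_union es)"
  using finite_subset[OF supp_union_chain_subset] by simp

lemma rep_chains_Suc:
  "rep_chains N V t g (Suc j) = (\<lambda>(es, e). e # es) `
     (SIGMA es:rep_chains N V t g j. {e \<in> short_reps N V t g. \<not> supp e \<subseteq> supp_union es})"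
proof
  show "rep_chains N V t g (Suc j) \<subseteq> (\<lambda>(es, e). e # es) `
      (SIGMA es:rep_chains N V t g j. {e \<in> short_reps N V t g. \<not> supp e \<subseteq> supp_union es})"
  proof
    fix xs assume "xs \<in> rep_chains N V t g (Suc j)"
    then obtain e es where "xs = e # es" "length es = j" "is_chain N V t g (e # es)"
      unfolding rep_chains_def by (cases xs) auto
    then show "xs \<in> (\<lambda>(es, e). e # es) `
        (SIGMA es:rep_chains N V t g j. {e \<in> short_reps N V t g. \<not> supp e \<subseteq> supp_union es})"
      unfolding rep_chains_def by (intro image_eqI[of _ _ "(es, e)"]) auto
  qed
qed (auto simp: rep_chains_def)

lemma finite_rep_chains: "finite V \<Longrightarrow> finite (rep_chains N V t g j)"
proof (induction j)
  case 0
  have "rep_chains N V t g 0 = {[]}"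
    unfolding rep_chains_def by auto
  then show ?case
    by simp
next
  case (Suc j)
  have "finite {e \<in> short_reps N V t g. \<not> supp e \<subseteq> supp_union es}" for es
    using finite_short_vecs[OF Suc.prems] unfolding short_reps_def by simp
  then show ?case
    unfolding rep_chains_Suc using Suc by auto
qed

lemma sum_chain_extensions_pow_le:
  fixes x :: real
  assumes V: "finite V" "0 \<in> V" "\<forall>v\<in>V. \<bar>v\<bar> \<le> int K" and x: "x \<ge> 0"
    and chain: "is_chain N V (Suc t) g es"
  shows "(\<Sum>e\<in>{e \<in> short_reps N V (Suc t) g. \<not> supp e \<subseteq> supp_union es}. x ^ card (supp_union (e # es)))
           \<le> x ^ card (supp_union es) * (real (card V * (2 * K + 2)) * x * real (card V) ^ card (supp_union es)
               * (1 + real N * real (card V) * x) ^ t)"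
proof -
  let ?W = "supp_union es"
  let ?R = "{e \<in> short_reps N V (Suc t) g. \<not> supp e \<subseteq> ?W}"
  have "card (supp_union (e # es)) = card ?W + card (supp e - ?W)" if "e \<in> ?R" for e
  proof -
    have "finite (supp e)"
      using that finite_supp_short_vecs unfolding short_reps_def by blast
    then have "card (?W \<union> (supp e - ?W)) = card ?W + card (supp e - ?W)"
      using finite_supp_union_chain[OF chain] by (intro card_Un_disjoint) auto
    then show ?thesis
      by (simp add: Un_commute)
  qed
  then have "(\<Sum>e\<in>?R. x ^ card (supp_union (e # es))) = x ^ card ?W * (\<Sum>e\<in>?R. x ^ card (supp e - ?W))"
    by (simp add: power_add sum_distrib_left)
  also have "(\<Sum>e\<in>?R. x ^ card (supp e - ?W))
      \<le> real (card V * (2 * K + 2)) * (\<Sum>e\<in>short_vecs N V t. x * x ^ card (supp e - ?W))"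
    by (rule sum_short_reps_pow_le[OF V x])
  also have "\<dots> = real (card V * (2 * K + 2)) * x * (\<Sum>e\<in>short_vecs N V t. x ^ card (supp e - ?W))"
    by (simp add: sum_distrib_left mult.assoc)
  also have "\<dots> \<le> real (card V * (2 * K + 2)) * x
      * (real (card V) ^ card ?W * (1 + real N * real (card V) * x) ^ t)"
    using x finite_supp_union_chain[OF chain]
    by (intro mult_left_mono sum_short_vecs_pow_le[OF V(1,2) x]) auto
  finally show ?thesis
    using x by (simp add: mult_left_mono mult.assoc)
qed

lemma sum_chains_pow_le:
  fixes x :: real
  assumes V: "finite V" "0 \<in> V" "\<forall>v\<in>V. \<bar>v\<bar> \<le> int K" and x: "x \<ge> 0" and "j \<le> J"
  shows "(\<Sum>es\<in>rep_chains N V (Suc t) g j. x ^ card (supp_union es))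
           \<le> (real (card V * (2 * K + 2)) * x * real (card V) ^ (Suc t * J)
               * (1 + real N * real (card V) * x) ^ t) ^ j"
  using \<open>j \<le> J\<close>
proof (induction j)
  case 0
  have "rep_chains N V (Suc t) g 0 = {[]}"
    unfolding rep_chains_def by auto
  then show ?case
    by simp
next
  case (Suc j)
  let ?Ch = "rep_chains N V (Suc t) g j"
  let ?R = "\<lambda>es. {e \<in> short_reps N V (Suc t) g. \<not> supp e \<subseteq> supp_union es}"
  let ?b = "real (card V * (2 * K + 2)) * x * real (card V) ^ (Suc t * J)
              * (1 + real N * real (card V) * x) ^ t"
  have step: "(\<Sum>e\<in>?R es. x ^ card (supp_union (e # es))) \<le> x ^ card (supp_union es) * ?b"
    if "es \<in> ?Ch" for es
  proof -
    have chain: "is_chain N V (Suc t) g es" and "length es = j"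
      using that unfolding rep_chains_def by auto
    then have "card (supp_union es) \<le> Suc t * J"
      using card_supp_union_chain[OF chain] Suc.prems by (meson Suc_leD le_trans mult_le_mono2)
    then have "real (card V) ^ card (supp_union es) \<le> real (card V) ^ (Suc t * J)"
      using one_le_card_of_mem[OF V(1,2)] by (intro power_increasing) auto
    then show ?thesis
      using sum_chain_extensions_pow_le[OF V x chain] x
      by (elim order_trans) (simp add: mult_left_mono mult_right_mono mult.assoc)
  qed
  have inj: "inj_on (\<lambda>(es, e). e # es) (Sigma ?Ch ?R)"
    by (rule inj_onI) auto
  have "(\<Sum>es\<in>rep_chains N V (Suc t) g (Suc j). x ^ card (supp_union es))
      = (\<Sum>(es, e)\<in>Sigma ?Ch ?R. x ^ card (supp_union (e # es)))"
    unfolding rep_chains_Suc sum.reindex[OF inj] by (simp add: comp_def split_def)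
  also have "\<dots> = (\<Sum>es\<in>?Ch. \<Sum>e\<in>?R es. x ^ card (supp_union (e # es)))"
    using finite_short_vecs[OF V(1)]
    by (intro sum.Sigma[symmetric]) (auto simp: finite_rep_chains[OF V(1)] short_reps_def)
  also have "\<dots> \<le> (\<Sum>es\<in>?Ch. x ^ card (supp_union es) * ?b)"
    using step by (rule sum_mono)
  also have "\<dots> = (\<Sum>es\<in>?Ch. x ^ card (supp_union es)) * ?b"
    by (simp add: sum_distrib_right)
  also have "\<dots> \<le> ?b ^ j * ?b"
    using Suc x by (intro mult_right_mono) auto
  finally show ?case
    by (simp add: mult.commute)
qed

lemma reps_subset_short_reps:
  assumes "S \<subseteq> {0..<int N}"
  shows "reps N M t S g \<subseteq> {e \<in> short_reps N (M \<union> {0}) t g. supp e \<subseteq> S}"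
proof
  fix e assume "e \<in> reps N M t S g"
  then have e: "\<forall>s. s \<notin> S \<longrightarrow> e s = 0" "\<forall>s\<in>S. e s \<in> M \<union> {0}" "card {s \<in> S. e s \<noteq> 0} \<le> t"
      "(\<Sum>s\<in>S. e s * s) mod int N = g mod int N"
    unfolding reps_def by auto
  have supp: "supp e \<subseteq> S" "{s \<in> S. e s \<noteq> 0} = supp e"
    using e(1) unfolding supp_def by auto
  have "lin_comb N e = (\<Sum>s\<in>S. e s * s)"
    unfolding lin_comb_def using assms e(1) by (intro sum.mono_neutral_right) auto
  moreover have "e s \<in> M \<union> {0}" for s
    using e(1,2) by (cases "s \<in> S") auto
  then have "e \<in> short_vecs N (M \<union> {0}) t"
    unfolding short_vecs_def using assms e(1,3) supp(2) by auto
  ultimately show "e \<in> {e \<in> short_reps N (M \<union> {0}) t g. supp e \<subseteq> S}"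
    unfolding short_reps_def using e(4) supp(1) by simp
qed

lemma obtain_maximal_chain:
  assumes no_chain: "\<forall>es\<in>rep_chains N V t g L. \<not> supp_union es \<subseteq> S" and "L \<ge> 1"
  obtains es where "is_chain N V t g es" "length es < L" "supp_union es \<subseteq> S"
    "\<And>e. e \<in> short_reps N V t g \<Longrightarrow> supp e \<subseteq> S \<Longrightarrow> supp e \<subseteq> supp_union es"
proof -
  define P where "P j \<longleftrightarrow> (\<exists>es. is_chain N V t g es \<and> length es = j \<and> supp_union es \<subseteq> S)" for j
  have bounded: "j < L" if "P j" for j
  proof (rule ccontr)
    assume "\<not> j < L"
    obtain es where es: "is_chain N V t g es" "length es = j" "supp_union es \<subseteq> S"
      using \<open>P j\<close> unfolding P_def by blast
    have "drop (j - L) es \<in> rep_chains N V t g L"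
      unfolding rep_chains_def using is_chain_drop[OF es(1)] es(2) \<open>\<not> j < L\<close> by simp
    moreover have "supp_union (drop (j - L) es) \<subseteq> S"
      using supp_union_drop[of "j - L" es] es(3) by (rule order_trans)
    ultimately show False
      using no_chain by blast
  qed
  have "P 0"
    unfolding P_def by (intro exI[of _ "[]"]) simp
  then obtain j where j: "P j" "\<And>j'. P j' \<Longrightarrow> j' \<le> j"
    using Nat.ex_has_greatest_nat[of P 0 L] bounded less_imp_le_nat by blast
  then obtain es where es: "is_chain N V t g es" "length es = j" "supp_union es \<subseteq> S"
    unfolding P_def by blast
  show ?thesis
  proof (rule that[OF es(1) _ es(3)])
    show "length es < L"
      using bounded j(1) es(2) by simp
    show "supp e \<subseteq> supp_union es" if "e \<in> short_reps N V t g" "supp e \<subseteq> S" for e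
    proof (rule ccontr)
      assume "\<not> supp e \<subseteq> supp_union es"
      then have "P (Suc j)"
        unfolding P_def using es that by (intro exI[of _ "e # es"]) simp
      then show False
        using j(2) by (metis Suc_n_not_le_n)
    qed
  qed
qed

lemma lambda_packing_if_avoids:
  assumes M: "finite M" and S: "S \<subseteq> {0..<int N}" and L: "L \<ge> 1"
    and no_chain: "\<forall>g\<in>{0..<int N}. \<forall>es\<in>rep_chains N (M \<union> {0}) t g L. \<not> supp_union es \<subseteq> S"
    and no_collision: "\<forall>(e, e')\<in>collision_pairs N (M \<union> {0}) t. \<not> supp e \<subseteq> S"
  shows "lambda_packing N (2 ^ (t * (L - 1))) M t S"
  unfolding lambda_packing_def
proof
  fix g assume g: "g \<in> {0..<int N}"
  let ?V = "M \<union> {0}"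
  let ?R = "{e \<in> short_reps N ?V t g. supp e \<subseteq> S}"
  have no_chain_g: "\<forall>es\<in>rep_chains N ?V t g L. \<not> supp_union es \<subseteq> S"
    using no_chain g by blast
  obtain es where es: "is_chain N ?V t g es" "length es < L" "supp_union es \<subseteq> S"
      "\<And>e. e \<in> short_reps N ?V t g \<Longrightarrow> supp e \<subseteq> S \<Longrightarrow> supp e \<subseteq> supp_union es"
    using obtain_maximal_chain[OF no_chain_g L] by blast
  have inj: "inj_on supp ?R"
  proof (rule inj_onI, rule ccontr)
    fix e e' assume "e \<in> ?R" "e' \<in> ?R" "supp e = supp e'" "e \<noteq> e'"
    then have "(e, e') \<in> collision_pairs N ?V t" "supp e \<subseteq> S"
      unfolding collision_pairs_def short_reps_def by auto
    then show False
      using no_collision by blast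
  qed
  have supp_R: "supp ` ?R \<subseteq> Pow (supp_union es)"
    using es(4) by auto
  have fin: "finite (supp_union es)"
    by (rule finite_supp_union_chain[OF es(1)])
  have "finite ?R"
    using finite_short_vecs[of ?V N t] M unfolding short_reps_def by simp
  then have "card (reps N M t S g) \<le> card ?R"
    using reps_subset_short_reps[OF S] by (rule card_mono)
  also have "\<dots> = card (supp ` ?R)"
    using inj by (rule card_image[symmetric])
  also have "\<dots> \<le> card (Pow (supp_union es))"
    using fin supp_R by (intro card_mono) simp_all
  also have "\<dots> = 2 ^ card (supp_union es)"
    using fin by (rule card_Pow)
  also have "\<dots> \<le> 2 ^ (t * (L - 1))"
  proof (rule power_increasing)
    have "t * length es \<le> t * (L - 1)"
      using es(2) by (intro mult_le_mono2) linarith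
    then show "card (supp_union es) \<le> t * (L - 1)"
      using card_supp_union_chain[OF es(1)] by (rule order_trans[rotated])
  qed simp
  finally show "card (reps N M t S g) \<le> 2 ^ (t * (L - 1))" .
qed

section \<open>Random subsets\<close>

lemma binomial_diff_mult_power_le:
  "u \<le> n \<Longrightarrow> n \<le> N \<Longrightarrow> real ((N - u) choose (n - u)) * real N ^ u \<le> real (N choose n) * real n ^ u"
proof (induction u)
  case (Suc u)
  define X where "X = real ((N - u) choose (n - u))"
  define X' where "X' = real ((N - Suc u) choose (n - Suc u))"
  have IH: "X * real N ^ u \<le> real (N choose n) * real n ^ u"
    using Suc unfolding X_def by simp
  have "Suc (N - Suc u) = N - u" "Suc (n - Suc u) = n - u"
    using Suc.prems by auto
  then have "(N - u) * ((N - Suc u) choose (n - Suc u)) = ((N - u) choose (n - u)) * (n - u)"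
    using Suc_times_binomial_eq[of "N - Suc u" "n - Suc u"] by simp
  then have pascal: "real (N - u) * X' = X * real (n - u)"
    unfolding X_def X'_def by (simp only: of_nat_mult[symmetric])
  have "real (n - u) * real N \<le> real n * real (N - u)"
    using Suc.prems by (simp add: algebra_simps mult_right_mono)
  have "X' * real N * real (N - u) = X * (real (n - u) * real N)"
    using pascal by (simp add: ac_simps)
  also have "\<dots> \<le> X * (real n * real (N - u))"
    unfolding X_def by (rule mult_left_mono) (fact, simp)
  finally have "X' * real N * real (N - u) \<le> X * real n * real (N - u)"
    by (simp add: ac_simps)
  then have "X' * real N \<le> X * real n"
    using Suc.prems by (simp add: mult_le_cancel_right)
  then have "X' * real N ^ Suc u \<le> X * real N ^ u * real n"
    using mult_right_mono[of "X' * real N" "X * real n" "real N ^ u"] by (simp add: ac_simps)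
  also have "\<dots> \<le> real (N choose n) * real n ^ u * real n"
    using IH by (rule mult_right_mono) simp
  finally show ?case
    unfolding X'_def by (simp add: ac_simps)
qed simp

lemma card_supersets_of_card:
  assumes U: "finite U" and W: "W \<subseteq> U" "card W \<le> n"
  shows "card {S. S \<subseteq> U \<and> card S = n \<and> W \<subseteq> S} = (card U - card W) choose (n - card W)"
proof -
  have fin_W: "finite W"
    using finite_subset[OF W(1) U] .
  have "bij_betw (\<lambda>S. S - W) {S. S \<subseteq> U \<and> card S = n \<and> W \<subseteq> S} {T. T \<subseteq> U - W \<and> card T = n - card W}"
  proof (rule bij_betw_byWitness[where f' = "\<lambda>T. T \<union> W"])
    show "(\<lambda>S. S - W) ` {S. S \<subseteq> U \<and> card S = n \<and> W \<subseteq> S} \<subseteq> {T. T \<subseteq> U - W \<and> card T = n - card W}"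
      using fin_W by (auto simp: card_Diff_subset)
    show "(\<lambda>T. T \<union> W) ` {T. T \<subseteq> U - W \<and> card T = n - card W} \<subseteq> {S. S \<subseteq> U \<and> card S = n \<and> W \<subseteq> S}"
    proof clarify
      fix T assume T: "T \<subseteq> U - W" "card T = n - card W"
      then have "card (T \<union> W) = card T + card W"
        using fin_W finite_subset[OF T(1)] U by (intro card_Un_disjoint) auto
      then show "T \<union> W \<subseteq> U \<and> card (T \<union> W) = n \<and> W \<subseteq> T \<union> W"
        using T W by auto
    qed
  qed auto
  then have "card {S. S \<subseteq> U \<and> card S = n \<and> W \<subseteq> S} = card {T. T \<subseteq> U - W \<and> card T = n - card W}"
    by (rule bij_betw_same_card)
  also have "\<dots> = card (U - W) choose (n - card W)"
    using U by (intro n_subsets) simp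
  finally show ?thesis
    using W(1) fin_W by (simp add: card_Diff_subset)
qed

lemma card_supersets_le:
  assumes U: "finite U" and W: "W \<subseteq> U" and n: "n \<le> card U"
  shows "real (card {S. S \<subseteq> U \<and> card S = n \<and> W \<subseteq> S})
           \<le> real (card U choose n) * (real n / real (card U)) ^ card W"
proof (cases "card W \<le> n")
  case True
  have pos: "real (card U) ^ card W > 0"
    using W U by (cases "card U = 0") (auto simp: finite_subset)
  have "real (card {S. S \<subseteq> U \<and> card S = n \<and> W \<subseteq> S}) * real (card U) ^ card W
      \<le> real (card U choose n) * real n ^ card W"
    unfolding card_supersets_of_card[OF U W True] by (rule binomial_diff_mult_power_le[OF True n])
  then show ?thesis
    using pos by (simp add: power_divide pos_le_divide_eq)
next
  case False
  have "card W \<le> card S" if "S \<subseteq> U" "W \<subseteq> S" for S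
    using that U by (intro card_mono) (auto intro: finite_subset)
  then have empty: "{S. S \<subseteq> U \<and> card S = n \<and> W \<subseteq> S} = {}"
    using False by auto
  show ?thesis
    unfolding empty by simp
qed

text \<open>The first moment method: a uniformly random \<open>n\<close>-subset of \<open>U\<close> contains a fixed set
  \<open>W\<close> with probability at most \<open>(n / |U|)^|W|\<close>.\<close>
lemma obtain_subset_avoiding:
  assumes U: "finite U" "n \<le> card U" and W: "finite I" "\<forall>i\<in>I. W i \<subseteq> U"
    and small: "(\<Sum>i\<in>I. (real n / real (card U)) ^ card (W i)) < 1"
  obtains S where "S \<subseteq> U" "card S = n" "\<forall>i\<in>I. \<not> W i \<subseteq> S"
proof (rule ccontr)
  assume no_S: "\<not> thesis"
  let ?sup = "\<lambda>i. {S. S \<subseteq> U \<and> card S = n \<and> W i \<subseteq> S}"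
  have "{S. S \<subseteq> U \<and> card S = n} \<subseteq> (\<Union>i\<in>I. ?sup i)"
    using that no_S by blast
  then have "card {S. S \<subseteq> U \<and> card S = n} \<le> card (\<Union>i\<in>I. ?sup i)"
    using U(1) by (intro card_mono) (auto intro: finite_subset[of _ "Pow U"])
  also have "\<dots> \<le> (\<Sum>i\<in>I. card (?sup i))"
    using W(1) by (rule card_UN_le)
  finally have "real (card U choose n) \<le> (\<Sum>i\<in>I. real (card (?sup i)))"
    using U(1) by (simp add: n_subsets flip: of_nat_sum)
  also have "\<dots> \<le> (\<Sum>i\<in>I. real (card U choose n) * (real n / real (card U)) ^ card (W i))"
    using W(2) U by (intro sum_mono card_supersets_le) auto
  also have "\<dots> < real (card U choose n)"
    using small U(2) by (simp add: sum_distrib_left[symmetric])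
  finally show False
    by simp
qed

lemma weight_bound_of_density:
  fixes b c n N :: real
  assumes "1 \<le> n" "0 < N" "1 \<le> c" "0 \<le> b"
  shows "b * (n / N) * (1 + N * c * (n / N)) ^ m \<le> b * (2 * c) ^ m * (n ^ Suc m / N)"
proof -
  have "1 \<le> c * n"
    using assms mult_mono[of 1 c 1 n] by simp
  then have "(1 + N * c * (n / N)) ^ m \<le> (2 * c * n) ^ m"
    using assms(2) by (intro power_mono) auto
  then have "b * (n / N) * (1 + N * c * (n / N)) ^ m \<le> b * (n / N) * (2 * c * n) ^ m"
    using assms by (intro mult_left_mono) auto
  also have "\<dots> = b * (2 * c) ^ m * (n ^ Suc m / N)"
    by (simp add: power_mult_distrib)
  finally show ?thesis .
qed

lemma sum_rep_chains_density_le: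
  fixes C :: real
  assumes V: "finite V" "0 \<in> V" "\<forall>v\<in>V. \<bar>v\<bar> \<le> int K" and t: "t > 0" and n: "1 \<le> n" "0 < N"
    and C: "real (4 * K + 2) * real (card V) ^ (t * L + 2) * (2 * real (card V)) ^ t \<le> C"
  shows "(\<Sum>es\<in>rep_chains N V t g L. (real n / real N) ^ card (supp_union es))
           \<le> (C * (real n ^ t / real N)) ^ L"
proof -
  define c where "c = real (card V)"
  define x where "x = real n / real N"
  define y where "y = real n ^ t / real N"
  obtain t' where t': "t = Suc t'"
    using t by (cases t) auto
  have c: "1 \<le> c"
    unfolding c_def using one_le_card_of_mem[OF V(1,2)] by simp
  have x: "0 \<le> x"
    unfolding x_def by simp
  let ?b = "c * real (2 * K + 2) * c ^ (t * L)"
  have "(\<Sum>es\<in>rep_chains N V t g L. x ^ card (supp_union es))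
      \<le> (real (card V * (2 * K + 2)) * x * c ^ (t * L) * (1 + real N * c * x) ^ t') ^ L"
    unfolding c_def t' by (rule sum_chains_pow_le[OF V x]) simp
  also have "\<dots> \<le> (?b * (2 * c) ^ t' * y) ^ L"
  proof (rule power_mono)
    have "real (card V * (2 * K + 2)) * x * c ^ (t * L) * (1 + real N * c * x) ^ t'
        = ?b * x * (1 + real N * c * x) ^ t'"
      unfolding c_def by (simp add: algebra_simps)
    also have "\<dots> \<le> ?b * (2 * c) ^ t' * y"
      using weight_bound_of_density[of "real n" "real N" c ?b t'] n c
      unfolding x_def y_def t' by simp
    finally show "real (card V * (2 * K + 2)) * x * c ^ (t * L) * (1 + real N * c * x) ^ t'
        \<le> ?b * (2 * c) ^ t' * y" .
  qed (use x c in simp)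
  also have "\<dots> \<le> (C * y) ^ L"
  proof (intro power_mono mult_right_mono)
    have "real (2 * K + 2) * c ^ (t * L + 1) * (2 * c) ^ t'
        \<le> real (4 * K + 2) * c ^ (t * L + 2) * (2 * c) ^ t"
      using c t' by (intro mult_mono power_increasing) auto
    then show "?b * (2 * c) ^ t' \<le> C"
      using C unfolding c_def by (simp add: ac_simps)
  qed (use c in \<open>auto simp: y_def\<close>)
  finally show ?thesis
    unfolding x_def y_def .
qed

lemma sum_collision_pairs_density_le:
  fixes C :: real
  assumes V: "finite V" "0 \<in> V" "\<forall>v\<in>V. \<bar>v\<bar> \<le> int K" and t: "t > 0" and L: "L \<ge> 1"
    and n: "1 \<le> n" "0 < N"
    and C: "real (4 * K + 2) * real (card V) ^ (t * L + 2) * (2 * real (card V)) ^ t \<le> C"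
  shows "(\<Sum>p\<in>collision_pairs N V t. (real n / real N) ^ card (supp (fst p))) \<le> C * (real n ^ t / real N)"
proof -
  define c where "c = real (card V)"
  define x where "x = real n / real N"
  define y where "y = real n ^ t / real N"
  obtain t' where t': "t = Suc t'"
    using t by (cases t) auto
  have c: "1 \<le> c"
    unfolding c_def using one_le_card_of_mem[OF V(1,2)] by simp
  have x: "0 \<le> x"
    unfolding x_def by simp
  let ?b = "real (card V ^ (t' + 2) * (4 * K + 2))"
  have "(\<Sum>p\<in>collision_pairs N V t. x ^ card (supp (fst p)))
      \<le> ?b * (\<Sum>e\<in>short_vecs N V t'. x * x ^ card (supp e))"
    unfolding t' by (rule sum_collision_pairs_pow_le[OF V x])
  also have "\<dots> = ?b * x * (\<Sum>e\<in>short_vecs N V t'. x ^ card (supp e - {}))"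
    by (simp add: sum_distrib_left ac_simps)
  also have "\<dots> \<le> ?b * x * (1 + real N * c * x) ^ t'"
    using sum_short_vecs_pow_le[OF V(1,2) x, of "{}" N t'] c x
    unfolding c_def by (intro mult_left_mono) auto
  also have "\<dots> \<le> ?b * (2 * c) ^ t' * y"
    using weight_bound_of_density[of "real n" "real N" c ?b t'] n c
    unfolding x_def y_def t' by (simp add: ac_simps)
  also have "\<dots> \<le> C * y"
  proof (rule mult_right_mono)
    have "?b * (2 * c) ^ t' = real (4 * K + 2) * c ^ (t' + 2) * (2 * c) ^ t'"
      unfolding c_def by (simp only: of_nat_mult of_nat_power mult.commute)
    also have "\<dots> \<le> real (4 * K + 2) * c ^ (t * L + 2) * (2 * c) ^ t"
      using c t' mult_le_mono2[OF L, of t] by (intro mult_mono power_increasing) auto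
    finally show "?b * (2 * c) ^ t' \<le> C"
      using C unfolding c_def by linarith
  qed (simp add: y_def)
  finally show ?thesis
    unfolding x_def y_def .
qed

lemma obtain_packing_subset:
  fixes M :: "int set" and C :: real
  assumes M: "finite M" "\<forall>v\<in>M. \<bar>v\<bar> \<le> int K" and t: "t > 0" and L: "L \<ge> 1"
    and n: "1 \<le> n" "n \<le> N"
    and C: "real (4 * K + 2) * real (card (M \<union> {0})) ^ (t * L + 2) * (2 * real (card (M \<union> {0}))) ^ t \<le> C"
    and small: "real N * (C * (real n ^ t / real N)) ^ L + C * (real n ^ t / real N) < 1"
  obtains S where "S \<subseteq> {0..<int N}" "card S = n" "lambda_packing N (2 ^ (t * (L - 1))) M t S"
proof -
  let ?V = "M \<union> {0}"
  let ?x = "real n / real N"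
  have V: "finite ?V" "0 \<in> ?V" "\<forall>v\<in>?V. \<bar>v\<bar> \<le> int K"
    using M by auto
  have N: "0 < N"
    using n by simp
  define I where "I = (SIGMA g:{0..<int N}. rep_chains N ?V t g L) <+> collision_pairs N ?V t"
  define W where "W i = (case i of Inl (g, es) \<Rightarrow> supp_union es | Inr (e, e') \<Rightarrow> supp e)"
    for i :: "(int \<times> (int \<Rightarrow> int) list) + ((int \<Rightarrow> int) \<times> (int \<Rightarrow> int))"
  have "(\<Sum>i\<in>I. ?x ^ card (W i))
      = (\<Sum>g\<in>{0..<int N}. \<Sum>es\<in>rep_chains N ?V t g L. ?x ^ card (supp_union es))
        + (\<Sum>p\<in>collision_pairs N ?V t. ?x ^ card (supp (fst p)))"
    unfolding I_def W_def using finite_rep_chains[OF V(1)] finite_collision_pairs[OF V(1)]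
    by (simp add: sum.Plus sum.Sigma split_def)
  also have "\<dots> \<le> (\<Sum>g\<in>{0..<int N}. (C * (real n ^ t / real N)) ^ L) + C * (real n ^ t / real N)"
    using sum_rep_chains_density_le[OF V t n(1) _ C] sum_collision_pairs_density_le[OF V t L n(1) _ C] N
    by (intro add_mono sum_mono) auto
  finally have small_I: "(\<Sum>i\<in>I. ?x ^ card (W i)) < 1"
    using small by simp
  obtain S where S: "S \<subseteq> {0..<int N}" "card S = n" "\<forall>i\<in>I. \<not> W i \<subseteq> S"
  proof (rule obtain_subset_avoiding[of "{0..<int N}" n I W])
    show "finite I"
      unfolding I_def using finite_rep_chains[OF V(1)] finite_collision_pairs[OF V(1)] by auto
    show "\<forall>i\<in>I. W i \<subseteq> {0..<int N}"
      unfolding I_def W_def rep_chains_def collision_pairs_def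
      by (auto dest!: supp_union_chain_subset supp_short_vecs)
    show "(\<Sum>i\<in>I. (real n / real (card {0..<int N})) ^ card (W i)) < 1"
      using small_I by simp
  qed (use n that in simp_all)
  have "lambda_packing N (2 ^ (t * (L - 1))) M t S"
  proof (rule lambda_packing_if_avoids[OF M(1) S(1) L])
    show "\<forall>g\<in>{0..<int N}. \<forall>es\<in>rep_chains N ?V t g L. \<not> supp_union es \<subseteq> S"
      using S(3) unfolding I_def W_def by force
    show "\<forall>(e, e')\<in>collision_pairs N ?V t. \<not> supp e \<subseteq> S"
      using S(3) unfolding I_def W_def by force
  qed
  then show ?thesis
    using that S(1,2) by blast
qed

section \<open>Asymptotics\<close>

lemma eventually_powr_ge:
  fixes a b :: real
  assumes "0 < a"
  shows "\<forall>\<^sub>F N in sequentially. b \<le> real N powr a"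
proof -
  have "((\<lambda>N. real N powr (- a)) \<longlongrightarrow> 0) sequentially"
    using assms by (intro tendsto_neg_powr filterlim_real_sequentially) simp
  then have "\<forall>\<^sub>F N in sequentially. real N powr (- a) < 1 / (\<bar>b\<bar> + 1)"
    by (rule order_tendstoD) simp
  moreover have "\<forall>\<^sub>F N in sequentially. 1 \<le> N"
    by (rule eventually_ge_at_top)
  ultimately show ?thesis
  proof eventually_elim
    case (elim N)
    then have "\<bar>b\<bar> + 1 < inverse (real N powr (- a))"
      by (simp add: field_simps powr_minus)
    then show ?case
      using elim by (simp add: powr_minus)
  qed
qed

lemma density_le_powr:
  fixes \<epsilon> :: real
  assumes t: "t > 0" and N: "1 \<le> N" and n: "real n \<le> 2 * real N powr (1 / real t - \<epsilon>)"
  shows "real n ^ t / real N \<le> 2 ^ t * real N powr (- (real t * \<epsilon>))"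
proof -
  have exponent: "real t * (1 / real t - \<epsilon>) = 1 - real t * \<epsilon>"
    using t by (simp add: field_simps)
  have "real n ^ t \<le> (2 * real N powr (1 / real t - \<epsilon>)) ^ t"
    using n by (intro power_mono) auto
  also have "\<dots> = 2 ^ t * real N powr (real t * (1 / real t - \<epsilon>))"
    using N powr_power[of "real N" "1 / real t - \<epsilon>" t] by (simp add: power_mult_distrib)
  also have "\<dots> = real N * (2 ^ t * real N powr (- (real t * \<epsilon>)))"
    using N unfolding exponent by (simp add: powr_diff powr_minus field_simps)
  finally show ?thesis
    using N by (simp add: divide_le_eq mult.commute)
qed

lemma packing_condition_le_powr:
  fixes d y C :: real
  assumes N: "1 \<le> N" and L: "1 + d \<le> d * real L" and C: "0 \<le> C"
    and y: "0 \<le> y" "y \<le> 2 ^ t * real N powr (- d)"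
  shows "real N * (C * y) ^ L + C * y \<le> ((C * 2 ^ t) ^ L + C * 2 ^ t) * real N powr (- d)"
proof -
  have "real N * (real N powr (- d)) ^ L = real N powr 1 * real N powr (real L * (- d))"
    using N powr_power[of "real N" "- d" L] by simp
  also have "\<dots> = real N powr (1 + real L * (- d))"
    by (rule powr_add[symmetric])
  also have "\<dots> \<le> real N powr (- d)"
    using L N by (intro powr_mono) (auto simp: algebra_simps)
  finally have NL: "real N * (real N powr (- d)) ^ L \<le> real N powr (- d)" .
  have "real N * (C * y) ^ L \<le> real N * (C * (2 ^ t * real N powr (- d))) ^ L"
    using y C by (intro mult_left_mono power_mono) auto
  also have "\<dots> = (C * 2 ^ t) ^ L * (real N * (real N powr (- d)) ^ L)"
    by (simp add: power_mult_distrib ac_simps)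
  also have "\<dots> \<le> (C * 2 ^ t) ^ L * real N powr (- d)"
    using NL C by (intro mult_left_mono) auto
  finally have "real N * (C * y) ^ L + C * y
      \<le> (C * 2 ^ t) ^ L * real N powr (- d) + C * (2 ^ t * real N powr (- d))"
    using y C by (intro add_mono mult_left_mono) auto
  then show ?thesis
    by (simp add: algebra_simps)
qed

lemma eventually_packing_condition:
  fixes \<epsilon> C :: real
  assumes t: "t > 0" and \<epsilon>: "\<epsilon> > 0" and L: "1 + real t * \<epsilon> \<le> real t * \<epsilon> * real L" and C: "0 \<le> C"
  shows "\<forall>\<^sub>F N in sequentially. \<forall>n. real n \<le> 2 * real N powr (1 / real t - \<epsilon>) \<longrightarrow>
           real N * (C * (real n ^ t / real N)) ^ L + C * (real n ^ t / real N) < 1"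
proof -
  define D where "D = (C * 2 ^ t) ^ L + C * 2 ^ t"
  have "((\<lambda>N. D * real N powr (- (real t * \<epsilon>))) \<longlongrightarrow> D * 0) sequentially"
    using t \<epsilon> by (intro tendsto_mult tendsto_const tendsto_neg_powr filterlim_real_sequentially) simp
  then have "\<forall>\<^sub>F N in sequentially. D * real N powr (- (real t * \<epsilon>)) < 1"
    by (rule order_tendstoD) simp
  moreover have "\<forall>\<^sub>F N in sequentially. 1 \<le> N"
    by (rule eventually_ge_at_top)
  ultimately show ?thesis
  proof eventually_elim
    case (elim N)
    show ?case
    proof (intro allI impI)
      fix n assume "real n \<le> 2 * real N powr (1 / real t - \<epsilon>)"
      then have y: "real n ^ t / real N \<le> 2 ^ t * real N powr (- (real t * \<epsilon>))"
        by (rule density_le_powr[OF t elim(2)])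
      have "real N * (C * (real n ^ t / real N)) ^ L + C * (real n ^ t / real N)
          \<le> D * real N powr (- (real t * \<epsilon>))"
        unfolding D_def by (rule packing_condition_le_powr[OF elim(2) L C _ y]) simp
      then show "real N * (C * (real n ^ t / real N)) ^ L + C * (real n ^ t / real N) < 1"
        using elim(1) by linarith
    qed
  qed
qed

lemma ceiling_powr_bounds:
  fixes a :: real
  assumes "0 < a" "a \<le> 1" "2 \<le> real N powr a"
  shows "1 \<le> nat \<lceil>real N powr a\<rceil>" "nat \<lceil>real N powr a\<rceil> \<le> N"
    "(1/2) * real N powr a \<le> real (nat \<lceil>real N powr a\<rceil>)"
    "real (nat \<lceil>real N powr a\<rceil>) \<le> (3/2) * real N powr a"
    "real (nat \<lceil>real N powr a\<rceil>) \<le> 2 * real N powr a"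
proof -
  have "N \<noteq> 0"
    using assms(3) by (cases "N = 0") auto
  then have "real N powr a \<le> real N powr 1"
    using assms(2) by (intro powr_mono) auto
  then show "nat \<lceil>real N powr a\<rceil> \<le> N"
    by (simp add: nat_le_iff ceiling_le_iff)
  show "1 \<le> nat \<lceil>real N powr a\<rceil>" "(1/2) * real N powr a \<le> real (nat \<lceil>real N powr a\<rceil>)"
      "real (nat \<lceil>real N powr a\<rceil>) \<le> (3/2) * real N powr a"
      "real (nat \<lceil>real N powr a\<rceil>) \<le> 2 * real N powr a"
    using assms(3) by linarith+
qed

lemma obtain_nat_mult_ge:
  fixes d :: real
  assumes "0 < d"
  obtains L :: nat where "1 \<le> L" "1 + d \<le> d * real L"
proof -
  obtain L :: nat where L: "(1 + d) / d < real L"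
    using reals_Archimedean2 by blast
  moreover have "1 < (1 + d) / d"
    using assms by (simp add: field_simps)
  ultimately have "1 < real L"
    by linarith
  then have "1 \<le> L"
    by simp
  moreover have "1 + d \<le> d * real L"
    using L assms by (simp add: field_simps)
  ultimately show ?thesis
    by (rule that)
qed

lemma eventually_exists_packing_subset:
  fixes \<epsilon> :: real and M :: "int set"
  assumes M: "finite M" "\<forall>v\<in>M. \<bar>v\<bar> \<le> int K"
    and t: "t > 0" and \<epsilon>: "0 < \<epsilon>" "\<epsilon> < 1 / real t"
    and L: "1 \<le> L" "1 + real t * \<epsilon> \<le> real t * \<epsilon> * real L"
  shows "\<forall>\<^sub>F N in sequentially. \<exists>S. S \<subseteq> {0..<int N} \<and>
           (1/2) * real N powr (1 / real t - \<epsilon>) \<le> real (card S) \<and>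
           real (card S) \<le> (3/2) * real N powr (1 / real t - \<epsilon>) \<and>
           lambda_packing N (2 ^ (t * (L - 1))) M t S"
proof -
  define \<alpha> where "\<alpha> = 1 / real t - \<epsilon>"
  define C where "C = real (4 * K + 2) * real (card (M \<union> {0})) ^ (t * L + 2)
                        * (2 * real (card (M \<union> {0}))) ^ t"
  have "1 / real t \<le> 1"
    using t by simp
  then have \<alpha>: "0 < \<alpha>" "\<alpha> \<le> 1"
    using \<epsilon> unfolding \<alpha>_def by linarith+
  have "0 \<le> C"
    unfolding C_def by simp
  have "\<forall>\<^sub>F N in sequentially. 2 \<le> real N powr \<alpha>"
    using \<alpha>(1) by (rule eventually_powr_ge)
  moreover have "\<forall>\<^sub>F N in sequentially. \<forall>n. real n \<le> 2 * real N powr \<alpha> \<longrightarrow>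
      real N * (C * (real n ^ t / real N)) ^ L + C * (real n ^ t / real N) < 1"
    unfolding \<alpha>_def using t \<epsilon>(1) L(2) \<open>0 \<le> C\<close> by (rule eventually_packing_condition)
  ultimately show ?thesis
  proof eventually_elim
    case (elim N)
    note n = ceiling_powr_bounds[OF \<alpha> elim(1)]
    have C_bound: "real (4 * K + 2) * real (card (M \<union> {0})) ^ (t * L + 2)
        * (2 * real (card (M \<union> {0}))) ^ t \<le> C"
      unfolding C_def by simp
    obtain S where "S \<subseteq> {0..<int N}" "card S = nat \<lceil>real N powr \<alpha>\<rceil>"
        "lambda_packing N (2 ^ (t * (L - 1))) M t S"
      by (rule obtain_packing_subset[OF M t L(1) n(1,2) C_bound elim(2)[rule_format, OF n(5)]])
    then show ?case
      using n(3,4) unfolding \<alpha>_def by auto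
  qed
qed

theorem theorem15:
  fixes t :: nat and \<epsilon> :: real
  assumes "t > 0" and "0 < \<epsilon>" and "\<epsilon> < 1 / real t"
  shows "\<exists>lam :: nat. \<forall>kp km :: nat. 0 \<le> km \<and> km \<le> kp \<and> kp + km \<ge> 1 \<longrightarrow>
           (\<exists>N0 :: nat. \<forall>N :: nat. N \<ge> N0 \<and> gcd N (fact kp) = 1 \<longrightarrow>
              (\<exists>S :: int set. S \<subseteq> {0..<int N} \<and>
                 (1/2) * real N powr (1 / real t - \<epsilon>) \<le> real (card S) \<and>
                 real (card S) \<le> (3/2) * real N powr (1 / real t - \<epsilon>) \<and>
                 lambda_packing N lam (punct_interval (- int km) (int kp)) t S))"
proof -
  have "0 < real t * \<epsilon>"
    using assms(1,2) by simp
  then obtain L :: nat where L: "1 \<le> L" "1 + real t * \<epsilon> \<le> real t * \<epsilon> * real L"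
    by (rule obtain_nat_mult_ge)
  show ?thesis
  proof (rule exI[of _ "2 ^ (t * (L - 1))"], intro allI impI)
    fix kp km :: nat
    assume "0 \<le> km \<and> km \<le> kp \<and> kp + km \<ge> 1"
    then have M: "finite (punct_interval (- int km) (int kp))"
        "\<forall>v\<in>punct_interval (- int km) (int kp). \<bar>v\<bar> \<le> int kp"
      unfolding punct_interval_def by auto
    obtain N0 where N0: "\<forall>N\<ge>N0. \<exists>S. S \<subseteq> {0..<int N} \<and>
        (1/2) * real N powr (1 / real t - \<epsilon>) \<le> real (card S) \<and>
        real (card S) \<le> (3/2) * real N powr (1 / real t - \<epsilon>) \<and>
        lambda_packing N (2 ^ (t * (L - 1))) (punct_interval (- int km) (int kp)) t S"
      using eventually_exists_packing_subset[OF M assms L] unfolding eventually_sequentially by (elim exE)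
    then show "\<exists>N0. \<forall>N. N \<ge> N0 \<and> gcd N (fact kp) = 1 \<longrightarrow> (\<exists>S. S \<subseteq> {0..<int N} \<and>
        (1/2) * real N powr (1 / real t - \<epsilon>) \<le> real (card S) \<and>
        real (card S) \<le> (3/2) * real N powr (1 / real t - \<epsilon>) \<and>
        lambda_packing N (2 ^ (t * (L - 1))) (punct_interval (- int km) (int kp)) t S)"
      by auto
  qed
qed

end
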